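(* Let $n\geq 1$ be an integer, let $R$ be a commutative ring, let $\iota:\mu_n\to R^\times$ be an injective group homomorphism (extended by $\iota(0)=0$), and let $X\in R$ be an $\mathbb{S}[\mu_{n,+}]$-generator of $R$ with respect to $\iota$. Let $m$ be a positive integer. Then the class of $Y$ in the $R$-algebra $R[Y]/(Y^m-X)$ is an $\mathbb{S}[\mu_{n,+}]$-generator of $R[Y]/(Y^m-X)$, with respect to the composite of $\iota$ with the canonical map $R\to R[Y]/(Y^m-X)$.
   Context: $\mu_n$ denotes the multiplicative group of $n$-th roots of unity and $\mu_{n,+}=\mu_n\cup\{0\}$. Given a ring $A$ and an injective group homomorphism $\iota:\mu_n\to A^\times$ (with $\iota(0):=0$), an element $X\in A$ is called an $\mathbb{S}[\mu_{n,+}]$-generator of $A$ if every $z\in A$ can be written uniquely as a finite sum $z=\sum_{j\ge 0}\iota(\alpha_j)X^j$ with coefficients $\alpha_j\in\mu_n\cup\{0\}$, only finitely many nonzero. *)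

theory Defs
  imports Complex_Main "HOL-Algebra.Algebra"
begin

definition mu :: "nat \<Rightarrow> complex set" where
  "mu n = {z. z ^ n = 1}"

definition mu_plus :: "nat \<Rightarrow> complex set" where
  "mu_plus n = insert 0 (mu n)"

definition mu_embedding :: "('a, 'b) ring_scheme \<Rightarrow> nat \<Rightarrow> (complex \<Rightarrow> 'a) \<Rightarrow> bool" where
  "mu_embedding A n iota \<longleftrightarrow>
     (\<forall>x\<in>mu n. iota x \<in> Units A) \<and>
     (\<forall>x\<in>mu n. \<forall>y\<in>mu n. iota (x * y) = iota x \<otimes>\<^bsub>A\<^esub> iota y) \<and>
     inj_on iota (mu n) \<and>
     iota 0 = \<zero>\<^bsub>A\<^esub>"

definition S_generator :: "('a, 'b) ring_scheme \<Rightarrow> nat \<Rightarrow> (complex \<Rightarrow> 'a) \<Rightarrow> 'a \<Rightarrow> bool" where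
  "S_generator A n iota x \<longleftrightarrow> x \<in> carrier A \<and>
     (\<forall>z\<in>carrier A. \<exists>!\<alpha> :: nat \<Rightarrow> complex.
        (\<forall>j. \<alpha> j \<in> mu_plus n) \<and> finite {j. \<alpha> j \<noteq> 0} \<and>
        z = finsum A (\<lambda>j. iota (\<alpha> j) \<otimes>\<^bsub>A\<^esub> pow A x j) {j. \<alpha> j \<noteq> 0})"

definition root_ideal :: "('a, 'b) ring_scheme \<Rightarrow> nat \<Rightarrow> 'a \<Rightarrow> (nat \<Rightarrow> 'a) set" where
  "root_ideal R m x =
     PIdl\<^bsub>UP R\<^esub> (monom (UP R) \<one>\<^bsub>R\<^esub> m \<ominus>\<^bsub>UP R\<^esub> monom (UP R) x 0)"

definition root_ext :: "('a, 'b) ring_scheme \<Rightarrow> nat \<Rightarrow> 'a \<Rightarrow> (nat \<Rightarrow> 'a) set ring" where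
  "root_ext R m x = UP R Quot root_ideal R m x"

definition root_ext_map :: "('a, 'b) ring_scheme \<Rightarrow> nat \<Rightarrow> 'a \<Rightarrow> 'a \<Rightarrow> (nat \<Rightarrow> 'a) set" where
  "root_ext_map R m x a = root_ideal R m x +>\<^bsub>UP R\<^esub> monom (UP R) a 0"

definition root_ext_Y :: "('a, 'b) ring_scheme \<Rightarrow> nat \<Rightarrow> 'a \<Rightarrow> (nat \<Rightarrow> 'a) set" where
  "root_ext_Y R m x = root_ideal R m x +>\<^bsub>UP R\<^esub> monom (UP R) \<one>\<^bsub>R\<^esub> 1"

end

theory Submission
  imports Defs
begin

(* In Q = R[Y]/(Y^m - x) the powers 1, Y, ..., Y^(m-1) form a basis over R, and
   Y^(mj+i) = x^j Y^i.  Hence an expansion sum_k iota(alpha_k) Y^k regroups by the residue of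
   k mod m into sum_(i<m) c_i Y^i with c_i = sum_j iota(alpha_(mj+i)) x^j, an expansion in R.
   Existence and uniqueness of expansions in Q thus reduce to those of the coordinates c_i in
   the basis and of the digit sequences j |-> alpha_(mj+i) in R. *)

definition mu_digits :: "nat \<Rightarrow> (nat \<Rightarrow> complex) set" where
  "mu_digits n = {\<alpha>. (\<forall>j. \<alpha> j \<in> mu_plus n) \<and> finite {j. \<alpha> j \<noteq> 0}}"

definition mu_expansion ::
    "('a, 'b) ring_scheme \<Rightarrow> (complex \<Rightarrow> 'a) \<Rightarrow> 'a \<Rightarrow> (nat \<Rightarrow> complex) \<Rightarrow> 'a" where
  "mu_expansion A iota x \<alpha> = (\<Oplus>\<^bsub>A\<^esub> j\<in>{j. \<alpha> j \<noteq> 0}. iota (\<alpha> j) \<otimes>\<^bsub>A\<^esub> x [^]\<^bsub>A\<^esub> j)"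

lemma (in ring) mu_embedding_image_subset:
  "mu_embedding R n iota \<Longrightarrow> iota ` mu_plus n \<subseteq> carrier R"
  by (auto simp: mu_embedding_def mu_plus_def Units_def)

lemma (in ring) mu_expansion_closed:
  assumes "iota ` mu_plus n \<subseteq> carrier R" "x \<in> carrier R" "\<alpha> \<in> mu_digits n"
  shows "mu_expansion R iota x \<alpha> \<in> carrier R"
  using assms unfolding mu_expansion_def mu_digits_def by (auto intro!: finsum_closed)

lemma (in ring) S_generator_iff_bij:
  assumes iota: "iota ` mu_plus n \<subseteq> carrier R"
  shows "S_generator R n iota x \<longleftrightarrow>
    x \<in> carrier R \<and> bij_betw (mu_expansion R iota x) (mu_digits n) (carrier R)"
proof -
  have "S_generator R n iota x \<longleftrightarrow>
      x \<in> carrier R \<and> (\<forall>z\<in>carrier R. \<exists>!\<alpha>. \<alpha> \<in> mu_digits n \<and> z = mu_expansion R iota x \<alpha>)"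
    unfolding S_generator_def mu_digits_def mu_expansion_def by simp
  also have "\<dots> \<longleftrightarrow> x \<in> carrier R \<and> bij_betw (mu_expansion R iota x) (mu_digits n) (carrier R)"
    using mu_expansion_closed[OF iota] unfolding bij_betw_def inj_on_def image_def by blast
  finally show ?thesis .
qed

lemma mu_digits_subsequence:
  fixes m :: nat
  assumes "0 < m" "\<alpha> \<in> mu_digits n"
  shows "(\<lambda>j. \<alpha> (m * j + i)) \<in> mu_digits n"
proof -
  have "inj (\<lambda>j. m * j + i)" using assms(1) by (auto simp: inj_on_def)
  moreover have "{j. \<alpha> (m * j + i) \<noteq> 0} = (\<lambda>j. m * j + i) -` {k. \<alpha> k \<noteq> 0}" by auto
  ultimately show ?thesis
    using assms(2) finite_vimageI[of "{k. \<alpha> k \<noteq> 0}"] by (auto simp: mu_digits_def)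
qed

lemma mu_digits_interleave:
  fixes m :: nat
  assumes "0 < m" "\<And>i. i < m \<Longrightarrow> \<beta> i \<in> mu_digits n"
  shows "(\<lambda>k. \<beta> (k mod m) (k div m)) \<in> mu_digits n"
proof -
  have "{k. \<beta> (k mod m) (k div m) \<noteq> 0} \<subseteq>
      (\<lambda>(i, j). m * j + i) ` (SIGMA i:{..<m}. {j. \<beta> i j \<noteq> 0})"
  proof
    fix k assume "k \<in> {k. \<beta> (k mod m) (k div m) \<noteq> 0}"
    with assms(1) show "k \<in> (\<lambda>(i, j). m * j + i) ` (SIGMA i:{..<m}. {j. \<beta> i j \<noteq> 0})"
      by (intro image_eqI[of _ _ "(k mod m, k div m)"]) auto
  qed
  moreover have "finite (SIGMA i:{..<m}. {j. \<beta> i j \<noteq> 0})"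
    using assms by (auto simp: mu_digits_def)
  ultimately show ?thesis
    using assms by (auto simp: mu_digits_def intro: finite_subset)
qed

lemma (in comm_monoid) finprod_split_residues:
  fixes m :: nat
  assumes m: "0 < m" and K: "finite K" and f: "f \<in> K \<rightarrow> carrier G"
  shows "finprod G f K = (\<Otimes>i\<in>{..<m}. \<Otimes>j\<in>{j. m * j + i \<in> K}. f (m * j + i))"
proof -
  define J where "J i = {j. m * j + i \<in> K}" for i
  have inj: "inj_on (\<lambda>j. m * j + i) A" for i A using m by (auto simp: inj_on_def)
  have "finite (J i)" for i
    unfolding J_def using finite_vimageI[OF K inj[of _ UNIV]] by (simp add: vimage_def)
  moreover have K_split: "K = (\<Union>i<m. (\<lambda>j. m * j + i) ` J i)"
  proof (intro equalityI subsetI)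
    fix k assume "k \<in> K"
    then have "k \<in> (\<lambda>j. m * j + k mod m) ` J (k mod m)"
      unfolding J_def by (intro image_eqI[of _ _ "k div m"]) auto
    then show "k \<in> (\<Union>i<m. (\<lambda>j. m * j + i) ` J i)" using m by auto
  qed (auto simp: J_def)
  moreover have "pairwise (\<lambda>i i'. disjnt ((\<lambda>j. m * j + i) ` J i) ((\<lambda>j. m * j + i') ` J i')) {..<m}"
  proof -
    have "(m * j + i) mod m = i" if "i < m" for i j using that by simp
    then show ?thesis
      unfolding pairwise_def disjnt_def by (metis (no_types, lifting) disjoint_iff imageE lessThan_iff)
  qed
  ultimately have "finprod G f K = (\<Otimes>i\<in>{..<m}. finprod G f ((\<lambda>j. m * j + i) ` J i))"
    using f K_split by (subst K_split) (intro finprod_UN_disjoint, auto)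
  also have "\<dots> = (\<Otimes>i\<in>{..<m}. \<Otimes>j\<in>J i. f (m * j + i))"
    using f inj by (intro finprod_cong' finprod_reindex) (auto simp: J_def intro!: finprod_closed)
  finally show ?thesis unfolding J_def .
qed

lemma (in ring_hom_cring) finsum_powers_regroup:
  fixes m :: nat
  assumes m: "0 < m" and x: "x \<in> carrier R" and y: "y \<in> carrier S"
    and y_pow: "y [^]\<^bsub>S\<^esub> m = h x"
    and K: "finite K" and g: "g \<in> K \<rightarrow> carrier R"
  shows "(\<Oplus>\<^bsub>S\<^esub> k\<in>K. h (g k) \<otimes>\<^bsub>S\<^esub> y [^]\<^bsub>S\<^esub> k) =
    (\<Oplus>\<^bsub>S\<^esub> i\<in>{..<m}. h (\<Oplus>j\<in>{j. m * j + i \<in> K}. g (m * j + i) \<otimes> x [^] j) \<otimes>\<^bsub>S\<^esub> y [^]\<^bsub>S\<^esub> i)"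
proof -
  define J where "J i = {j. m * j + i \<in> K}" for i
  have J_fin: "finite (J i)" for i
    using finite_vimageI[OF K, of "\<lambda>j. m * j + i"] m by (simp add: J_def vimage_def inj_on_def)
  have "(\<Oplus>\<^bsub>S\<^esub> k\<in>K. h (g k) \<otimes>\<^bsub>S\<^esub> y [^]\<^bsub>S\<^esub> k) =
      (\<Oplus>\<^bsub>S\<^esub> i\<in>{..<m}. \<Oplus>\<^bsub>S\<^esub> j\<in>J i. h (g (m * j + i)) \<otimes>\<^bsub>S\<^esub> y [^]\<^bsub>S\<^esub> (m * j + i))"
    unfolding J_def using g y by (intro S.add.finprod_split_residues m K) auto
  also have "\<dots> = (\<Oplus>\<^bsub>S\<^esub> i\<in>{..<m}. \<Oplus>\<^bsub>S\<^esub> j\<in>J i. h (g (m * j + i) \<otimes> x [^] j) \<otimes>\<^bsub>S\<^esub> y [^]\<^bsub>S\<^esub> i)"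
  proof (intro S.add.finprod_cong' refl)
    fix i j assume "j \<in> J i"
    then have "g (m * j + i) \<in> carrier R" using g J_def by auto
    moreover have "y [^]\<^bsub>S\<^esub> (m * j + i) = h x [^]\<^bsub>S\<^esub> j \<otimes>\<^bsub>S\<^esub> y [^]\<^bsub>S\<^esub> i"
      using y by (simp add: S.nat_pow_mult S.nat_pow_pow y_pow[symmetric] mult.commute)
    ultimately show "h (g (m * j + i)) \<otimes>\<^bsub>S\<^esub> y [^]\<^bsub>S\<^esub> (m * j + i) =
        h (g (m * j + i) \<otimes> x [^] j) \<otimes>\<^bsub>S\<^esub> y [^]\<^bsub>S\<^esub> i"
      using x y by (simp add: S.m_assoc)
  qed (use g x y J_def in \<open>auto intro!: S.finsum_closed\<close>)
  also have "\<dots> = (\<Oplus>\<^bsub>S\<^esub> i\<in>{..<m}. h (\<Oplus>j\<in>J i. g (m * j + i) \<otimes> x [^] j) \<otimes>\<^bsub>S\<^esub> y [^]\<^bsub>S\<^esub> i)"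
  proof (intro S.add.finprod_cong' refl)
    fix i
    have summand: "(\<lambda>j. g (m * j + i) \<otimes> x [^] j) \<in> J i \<rightarrow> carrier R"
      using g x by (auto simp: J_def)
    then have "(\<lambda>j. h (g (m * j + i) \<otimes> x [^] j)) \<in> J i \<rightarrow> carrier S" by auto
    from S.finsum_ldistr[OF J_fin _ this, of "y [^]\<^bsub>S\<^esub> i"] summand y
    show "(\<Oplus>\<^bsub>S\<^esub> j\<in>J i. h (g (m * j + i) \<otimes> x [^] j) \<otimes>\<^bsub>S\<^esub> y [^]\<^bsub>S\<^esub> i) =
        h (\<Oplus>j\<in>J i. g (m * j + i) \<otimes> x [^] j) \<otimes>\<^bsub>S\<^esub> y [^]\<^bsub>S\<^esub> i"
      by (simp add: o_def)
  qed (use g x y in \<open>auto simp: J_def Pi_def intro!: R.finsum_closed\<close>)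
  finally show ?thesis unfolding J_def .
qed

lemma (in ring_hom_cring) mu_expansion_regroup:
  fixes m :: nat
  assumes m: "0 < m" and iota: "iota ` mu_plus n \<subseteq> carrier R" and x: "x \<in> carrier R"
    and y: "y \<in> carrier S" and y_pow: "y [^]\<^bsub>S\<^esub> m = h x" and \<alpha>: "\<alpha> \<in> mu_digits n"
  shows "mu_expansion S (h \<circ> iota) y \<alpha> =
    (\<Oplus>\<^bsub>S\<^esub> i\<in>{..<m}. h (mu_expansion R iota x (\<lambda>j. \<alpha> (m * j + i))) \<otimes>\<^bsub>S\<^esub> y [^]\<^bsub>S\<^esub> i)"
proof -
  have "finite {k. \<alpha> k \<noteq> 0}" "iota \<circ> \<alpha> \<in> {k. \<alpha> k \<noteq> 0} \<rightarrow> carrier R"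
    using \<alpha> iota by (auto simp: mu_digits_def)
  from finsum_powers_regroup[OF m x y y_pow this] show ?thesis
    by (simp add: mu_expansion_def)
qed

lemma (in ring_hom_cring) mu_expansion_inj_on_if_powers_inj_on:
  fixes m :: nat
  assumes m: "0 < m" and iota: "iota ` mu_plus n \<subseteq> carrier R" and gen: "S_generator R n iota x"
    and y: "y \<in> carrier S" and y_pow: "y [^]\<^bsub>S\<^esub> m = h x"
    and indep: "inj_on (\<lambda>c. \<Oplus>\<^bsub>S\<^esub> i\<in>{..<m}. h (c i) \<otimes>\<^bsub>S\<^esub> y [^]\<^bsub>S\<^esub> i) ({..<m} \<rightarrow>\<^sub>E carrier R)"
  shows "inj_on (mu_expansion S (h \<circ> iota) y) (mu_digits n)"
proof (rule inj_onI)
  let ?E = "mu_expansion R iota x"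
  fix \<alpha> \<gamma> assume \<alpha>: "\<alpha> \<in> mu_digits n" and \<gamma>: "\<gamma> \<in> mu_digits n"
    and eq: "mu_expansion S (h \<circ> iota) y \<alpha> = mu_expansion S (h \<circ> iota) y \<gamma>"
  have x: "x \<in> carrier R" and E_bij: "bij_betw ?E (mu_digits n) (carrier R)"
    using gen R.S_generator_iff_bij[OF iota] by auto
  define blocks where "blocks \<delta> = (\<lambda>i\<in>{..<m}. ?E (\<lambda>j. \<delta> (m * j + i)))" for \<delta>
  have blocks: "blocks \<delta> \<in> {..<m} \<rightarrow>\<^sub>E carrier R" if "\<delta> \<in> mu_digits n" for \<delta>
    using R.mu_expansion_closed[OF iota x mu_digits_subsequence[OF m that]] by (auto simp: blocks_def)
  have regroup: "mu_expansion S (h \<circ> iota) y \<delta> =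
      (\<Oplus>\<^bsub>S\<^esub> i\<in>{..<m}. h (blocks \<delta> i) \<otimes>\<^bsub>S\<^esub> y [^]\<^bsub>S\<^esub> i)" if "\<delta> \<in> mu_digits n" for \<delta>
    unfolding mu_expansion_regroup[OF m iota x y y_pow that]
    using R.mu_expansion_closed[OF iota x mu_digits_subsequence[OF m that]] y
    by (intro S.add.finprod_cong') (auto simp: blocks_def)
  have blocks_eq: "blocks \<alpha> = blocks \<gamma>"
    using eq regroup[OF \<alpha>] regroup[OF \<gamma>] by (intro inj_onD[OF indep] blocks \<alpha> \<gamma>) simp
  have "?E (\<lambda>j. \<alpha> (m * j + i)) = ?E (\<lambda>j. \<gamma> (m * j + i))" if "i < m" for i
    using fun_cong[OF blocks_eq, of i] that by (simp add: blocks_def)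
  then have block_eq: "(\<lambda>j. \<alpha> (m * j + i)) = (\<lambda>j. \<gamma> (m * j + i))" if "i < m" for i
    using that E_bij mu_digits_subsequence[OF m] \<alpha> \<gamma>
    by (intro inj_onD[of ?E "mu_digits n"]) (auto simp: bij_betw_def)
  show "\<alpha> = \<gamma>"
  proof
    fix k show "\<alpha> k = \<gamma> k"
      using fun_cong[OF block_eq[OF mod_less_divisor[OF m, of k]], of "k div m"] by simp
  qed
qed

lemma (in ring_hom_cring) mu_expansion_onto_if_powers_onto:
  fixes m :: nat
  assumes m: "0 < m" and iota: "iota ` mu_plus n \<subseteq> carrier R" and gen: "S_generator R n iota x"
    and y: "y \<in> carrier S" and y_pow: "y [^]\<^bsub>S\<^esub> m = h x"
    and span: "carrier S \<subseteq> (\<lambda>c. \<Oplus>\<^bsub>S\<^esub> i\<in>{..<m}. h (c i) \<otimes>\<^bsub>S\<^esub> y [^]\<^bsub>S\<^esub> i) ` ({..<m} \<rightarrow>\<^sub>E carrier R)"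
  shows "carrier S \<subseteq> mu_expansion S (h \<circ> iota) y ` mu_digits n"
proof
  let ?E = "mu_expansion R iota x"
  fix z assume "z \<in> carrier S"
  then obtain c where c: "c \<in> {..<m} \<rightarrow>\<^sub>E carrier R"
    and z: "z = (\<Oplus>\<^bsub>S\<^esub> i\<in>{..<m}. h (c i) \<otimes>\<^bsub>S\<^esub> y [^]\<^bsub>S\<^esub> i)"
    using span by auto
  have x: "x \<in> carrier R" and "?E ` mu_digits n = carrier R"
    using gen R.S_generator_iff_bij[OF iota] by (auto simp: bij_betw_def)
  with c have "\<forall>i<m. \<exists>\<beta>\<in>mu_digits n. c i = ?E \<beta>" by auto
  then obtain \<beta> where \<beta>: "\<And>i. i < m \<Longrightarrow> \<beta> i \<in> mu_digits n \<and> c i = ?E (\<beta> i)"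
    by metis
  define \<alpha> where "\<alpha> k = \<beta> (k mod m) (k div m)" for k
  have \<alpha>: "\<alpha> \<in> mu_digits n" unfolding \<alpha>_def using mu_digits_interleave[OF m] \<beta> by blast
  have "(\<lambda>j. \<alpha> (m * j + i)) = \<beta> i" if "i < m" for i
    using that by (auto simp: \<alpha>_def)
  then have "mu_expansion S (h \<circ> iota) y \<alpha> = z"
    unfolding mu_expansion_regroup[OF m iota x y y_pow \<alpha>] z
    using c y \<beta> by (intro S.add.finprod_cong') auto
  with \<alpha> show "z \<in> mu_expansion S (h \<circ> iota) y ` mu_digits n" by blast
qed

lemma (in ring_hom_cring) S_generator_if_power_basis:
  fixes m :: nat
  assumes m: "0 < m" and iota: "iota ` mu_plus n \<subseteq> carrier R" and gen: "S_generator R n iota x"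
    and y: "y \<in> carrier S" and y_pow: "y [^]\<^bsub>S\<^esub> m = h x"
    and basis: "bij_betw (\<lambda>c. \<Oplus>\<^bsub>S\<^esub> i\<in>{..<m}. h (c i) \<otimes>\<^bsub>S\<^esub> y [^]\<^bsub>S\<^esub> i)
      ({..<m} \<rightarrow>\<^sub>E carrier R) (carrier S)"
  shows "S_generator S n (h \<circ> iota) y"
proof -
  have h_iota: "(h \<circ> iota) ` mu_plus n \<subseteq> carrier S" using iota by auto
  have "x \<in> carrier R" using gen by (simp add: S_generator_def)
  then have "mu_expansion S (h \<circ> iota) y ` mu_digits n \<subseteq> carrier S"
    using S.mu_expansion_closed[OF h_iota y] by auto
  with basis show ?thesis
    using S.S_generator_iff_bij[OF h_iota] y
      mu_expansion_inj_on_if_powers_inj_on[OF m iota gen y y_pow]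
      mu_expansion_onto_if_powers_onto[OF m iota gen y y_pow]
    by (auto simp: bij_betw_def)
qed

(* Inside ring locales, plain monom and coeff denote the list polynomials of
   HOL-Algebra.Polynomials, hence the qualified up_ring.monom and up_ring.coeff. *)
lemma (in UP_ring) coeff_finsum_monom:
  fixes m :: nat
  assumes c: "c \<in> {..<m} \<rightarrow> carrier R"
  shows "up_ring.coeff P (\<Oplus>\<^bsub>P\<^esub> i\<in>{..<m}. up_ring.monom P (c i) i) k = (if k < m then c k else \<zero>)"
proof -
  have "up_ring.coeff P (\<Oplus>\<^bsub>P\<^esub> i\<in>{..<m}. up_ring.monom P (c i) i) k =
      (\<Oplus>i\<in>{..<m}. up_ring.coeff P (up_ring.monom P (c i) i) k)"
    using c by (simp add: coeff_finsum Pi_def)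
  also have "\<dots> = (\<Oplus>i\<in>{..<m}. if i = k then c i else \<zero>)"
    using c by (intro R.finsum_cong') (auto simp: Pi_iff)
  also have "\<dots> = (if k < m then c k else \<zero>)"
  proof (cases "k < m")
    case False
    then have "(\<Oplus>i\<in>{..<m}. if i = k then c i else \<zero>) = (\<Oplus>i\<in>{..<m}. \<zero>)"
      by (intro R.finsum_cong') auto
    with False show ?thesis by simp
  qed (use c R.add.finprod_singleton_swap[of k "{..<m}" c] in auto)
  finally show ?thesis .
qed

locale root_extension = UP_cring +
  fixes m :: nat and x :: 'a
  assumes m_pos: "0 < m" and x_closed [simp]: "x \<in> carrier R"
begin

abbreviation "I \<equiv> root_ideal R m x"
abbreviation "Q \<equiv> root_ext R m x"
abbreviation "proj \<equiv> a_r_coset P I"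
abbreviation "emb \<equiv> root_ext_map R m x"
abbreviation "Y \<equiv> root_ext_Y R m x"

lemma root_ideal_ideal: "ideal I P"
  unfolding root_ideal_def P_def[symmetric] by (simp add: P.cgenideal_ideal)

lemma root_ideal_generator: "up_ring.monom P \<one> m \<ominus>\<^bsub>P\<^esub> up_ring.monom P x 0 \<in> I"
  unfolding root_ideal_def P_def[symmetric] by (simp add: P.cgenideal_self)

lemma proj_hom: "ring_hom_cring P Q proj"
  unfolding root_ext_def P_def[symmetric]
  by (rule ideal.rcos_ring_hom_cring[OF root_ideal_ideal P.is_cring])

lemma carrier_root_ext: "carrier Q = proj ` carrier P"
  unfolding root_ext_def P_def[symmetric] FactRing_def A_RCOSETS_def' by auto

lemma emb_eq: "emb a = proj (up_ring.monom P a 0)"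
  and Y_eq: "Y = proj (up_ring.monom P \<one> 1)"
  unfolding root_ext_map_def root_ext_Y_def P_def by simp_all

lemma emb_hom: "ring_hom_cring R Q emb"
proof -
  interpret proj: ring_hom_cring P Q proj by (rule proj_hom)
  have "emb = proj \<circ> (\<lambda>a. up_ring.monom P a 0)" by (simp add: fun_eq_iff emb_eq)
  also have "\<dots> \<in> ring_hom R Q"
    by (rule ring_hom_trans[OF const_ring_hom proj.homh])
  finally show ?thesis
    by (intro ring_hom_cringI R.is_cring proj.S.is_cring)
qed

lemma Y_closed: "Y \<in> carrier Q"
proof -
  interpret proj: ring_hom_cring P Q proj by (rule proj_hom)
  show ?thesis unfolding Y_eq by simp
qed

lemma proj_monom:
  assumes "c \<in> carrier R"
  shows "proj (up_ring.monom P c k) = emb c \<otimes>\<^bsub>Q\<^esub> Y [^]\<^bsub>Q\<^esub> k"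
proof -
  interpret proj: ring_hom_cring P Q proj by (rule proj_hom)
  have "up_ring.monom P c k = up_ring.monom P c 0 \<otimes>\<^bsub>P\<^esub> up_ring.monom P \<one> 1 [^]\<^bsub>P\<^esub> k"
    using monom_mult[OF assms R.one_closed, of 0 k] assms by (simp add: monom_pow)
  then show ?thesis using assms by (simp add: emb_eq Y_eq)
qed

lemma Y_pow: "Y [^]\<^bsub>Q\<^esub> m = emb x"
proof -
  interpret proj: ring_hom_cring P Q proj by (rule proj_hom)
  have "proj (up_ring.monom P \<one> m) = proj (up_ring.monom P x 0)"
    using P.quotient_eq_iff_same_a_r_cos[OF root_ideal_ideal] root_ideal_generator by simp
  then show ?thesis
    using proj_monom[of \<one> m] Y_closed by (simp add: emb_eq)
qed

lemma root_ideal_low_degree_zero: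
  assumes g: "g \<in> I" and high: "\<And>k. m \<le> k \<Longrightarrow> up_ring.coeff P g k = \<zero>"
  shows "g = \<zero>\<^bsub>P\<^esub>"
proof (rule ccontr)
  assume g_nonzero: "g \<noteq> \<zero>\<^bsub>P\<^esub>"
  obtain q where q: "q \<in> carrier P"
    and g_eq: "g = q \<otimes>\<^bsub>P\<^esub> (up_ring.monom P \<one> m \<ominus>\<^bsub>P\<^esub> up_ring.monom P x 0)"
    using g unfolding root_ideal_def P_def[symmetric] cgenideal_def by blast
  with g_nonzero have "q \<noteq> \<zero>\<^bsub>P\<^esub>" by auto
  then have lead: "up_ring.coeff P q (deg R q) \<noteq> \<zero>" using lcoeff_nonzero2[OF q] by simp
  have "g = up_ring.monom P \<one> m \<otimes>\<^bsub>P\<^esub> q \<ominus>\<^bsub>P\<^esub> x \<odot>\<^bsub>P\<^esub> q"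
    using q monom_mult_is_smult[OF x_closed q]
    by (simp add: g_eq a_minus_def P.r_distr P.r_minus P.m_comm[of q])
  then have "up_ring.coeff P g (deg R q + m) = up_ring.coeff P q (deg R q) \<ominus> x \<otimes> up_ring.coeff P q (deg R q + m)"
    using q coeff_monom_mult[OF R.one_closed q, of m "deg R q"] by simp
  also have "up_ring.coeff P q (deg R q + m) = \<zero>"
    using m_pos q by (intro deg_aboveD) auto
  finally have "up_ring.coeff P g (deg R q + m) = up_ring.coeff P q (deg R q)"
    using q by (simp add: a_minus_def)
  with high[of "deg R q + m"] lead show False by simp
qed

lemma proj_finsum_monom:
  assumes c: "c \<in> {..<m} \<rightarrow> carrier R"
  shows "(\<Oplus>\<^bsub>Q\<^esub> i\<in>{..<m}. emb (c i) \<otimes>\<^bsub>Q\<^esub> Y [^]\<^bsub>Q\<^esub> i) =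
    proj (\<Oplus>\<^bsub>P\<^esub> i\<in>{..<m}. up_ring.monom P (c i) i)"
proof -
  interpret proj: ring_hom_cring P Q proj by (rule proj_hom)
  interpret emb: ring_hom_cring R Q emb by (rule emb_hom)
  have "proj (\<Oplus>\<^bsub>P\<^esub> i\<in>{..<m}. up_ring.monom P (c i) i) =
      (\<Oplus>\<^bsub>Q\<^esub> i\<in>{..<m}. proj (up_ring.monom P (c i) i))"
    using c by (simp add: Pi_def o_def)
  also have "\<dots> = (\<Oplus>\<^bsub>Q\<^esub> i\<in>{..<m}. emb (c i) \<otimes>\<^bsub>Q\<^esub> Y [^]\<^bsub>Q\<^esub> i)"
    using c Y_closed by (intro proj.S.add.finprod_cong') (simp_all add: proj_monom Pi_iff)
  finally show ?thesis by simp
qed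

lemma root_ext_powers_inj_on:
  "inj_on (\<lambda>c. \<Oplus>\<^bsub>Q\<^esub> i\<in>{..<m}. emb (c i) \<otimes>\<^bsub>Q\<^esub> Y [^]\<^bsub>Q\<^esub> i) ({..<m} \<rightarrow>\<^sub>E carrier R)"
proof (rule inj_onI)
  fix c d assume c: "c \<in> {..<m} \<rightarrow>\<^sub>E carrier R" and d: "d \<in> {..<m} \<rightarrow>\<^sub>E carrier R"
    and eq: "(\<Oplus>\<^bsub>Q\<^esub> i\<in>{..<m}. emb (c i) \<otimes>\<^bsub>Q\<^esub> Y [^]\<^bsub>Q\<^esub> i) =
      (\<Oplus>\<^bsub>Q\<^esub> i\<in>{..<m}. emb (d i) \<otimes>\<^bsub>Q\<^esub> Y [^]\<^bsub>Q\<^esub> i)"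
  define poly where "poly c = (\<Oplus>\<^bsub>P\<^esub> i\<in>{..<m}. up_ring.monom P (c i) i)" for c
  have c': "c \<in> {..<m} \<rightarrow> carrier R" and d': "d \<in> {..<m} \<rightarrow> carrier R"
    using c d by (simp_all add: PiE_def)
  have closed: "poly c \<in> carrier P" "poly d \<in> carrier P"
    using c' d' unfolding poly_def by (auto simp: Pi_iff intro!: P.finsum_closed)
  have "proj (poly c) = proj (poly d)"
    using eq proj_finsum_monom[OF c'] proj_finsum_monom[OF d'] by (simp add: poly_def)
  then have "poly c \<ominus>\<^bsub>P\<^esub> poly d \<in> I"
    using P.quotient_eq_iff_same_a_r_cos[OF root_ideal_ideal closed] by simp
  then have "poly c \<ominus>\<^bsub>P\<^esub> poly d = \<zero>\<^bsub>P\<^esub>"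
    by (rule root_ideal_low_degree_zero)
      (use closed coeff_finsum_monom[OF c'] coeff_finsum_monom[OF d'] in \<open>simp add: poly_def\<close>)
  then have "poly c = poly d" using closed by simp
  then have "c k = d k" if "k < m" for k
    using coeff_finsum_monom[OF c', of k] coeff_finsum_monom[OF d', of k] that
    by (simp add: poly_def)
  then show "c = d" using c d by (intro PiE_ext) auto
qed

lemma root_ext_powers_onto:
  "carrier Q \<subseteq> (\<lambda>c. \<Oplus>\<^bsub>Q\<^esub> i\<in>{..<m}. emb (c i) \<otimes>\<^bsub>Q\<^esub> Y [^]\<^bsub>Q\<^esub> i) ` ({..<m} \<rightarrow>\<^sub>E carrier R)"
proof
  interpret proj: ring_hom_cring P Q proj by (rule proj_hom)
  interpret emb: ring_hom_cring R Q emb by (rule emb_hom)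
  fix z assume "z \<in> carrier Q"
  then obtain p where p: "p \<in> carrier P" and z: "z = proj p" using carrier_root_ext by auto
  define c where
    "c = (\<lambda>i\<in>{..<m}. \<Oplus>j\<in>{j. m * j + i \<in> {..deg R p}}. up_ring.coeff P p (m * j + i) \<otimes> x [^] j)"
  have "z = proj (\<Oplus>\<^bsub>P\<^esub> k\<in>{..deg R p}. up_ring.monom P (up_ring.coeff P p k) k)"
    using z up_repr[OF p] by simp
  also have "\<dots> = (\<Oplus>\<^bsub>Q\<^esub> k\<in>{..deg R p}. emb (up_ring.coeff P p k) \<otimes>\<^bsub>Q\<^esub> Y [^]\<^bsub>Q\<^esub> k)"
    using p Y_closed by (simp add: Pi_def o_def proj_monom cong: proj.S.add.finprod_cong)
  also have "\<dots> = (\<Oplus>\<^bsub>Q\<^esub> i\<in>{..<m}. emb (\<Oplus>j\<in>{j. m * j + i \<in> {..deg R p}}.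
      up_ring.coeff P p (m * j + i) \<otimes> x [^] j) \<otimes>\<^bsub>Q\<^esub> Y [^]\<^bsub>Q\<^esub> i)"
    using p by (intro emb.finsum_powers_regroup m_pos x_closed Y_closed Y_pow) auto
  also have "\<dots> = (\<Oplus>\<^bsub>Q\<^esub> i\<in>{..<m}. emb (c i) \<otimes>\<^bsub>Q\<^esub> Y [^]\<^bsub>Q\<^esub> i)"
    using p Y_closed by (intro proj.S.add.finprod_cong') (auto simp: c_def Pi_def intro!: R.finsum_closed)
  moreover have "c \<in> {..<m} \<rightarrow>\<^sub>E carrier R"
    using p by (auto simp: c_def intro!: R.finsum_closed)
  ultimately show "z \<in> (\<lambda>c. \<Oplus>\<^bsub>Q\<^esub> i\<in>{..<m}. emb (c i) \<otimes>\<^bsub>Q\<^esub> Y [^]\<^bsub>Q\<^esub> i) ` ({..<m} \<rightarrow>\<^sub>E carrier R)"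
    by blast
qed

lemma root_ext_power_basis:
  "bij_betw (\<lambda>c. \<Oplus>\<^bsub>Q\<^esub> i\<in>{..<m}. emb (c i) \<otimes>\<^bsub>Q\<^esub> Y [^]\<^bsub>Q\<^esub> i) ({..<m} \<rightarrow>\<^sub>E carrier R) (carrier Q)"
proof -
  interpret emb: ring_hom_cring R Q emb by (rule emb_hom)
  have "(\<lambda>c. \<Oplus>\<^bsub>Q\<^esub> i\<in>{..<m}. emb (c i) \<otimes>\<^bsub>Q\<^esub> Y [^]\<^bsub>Q\<^esub> i) ` ({..<m} \<rightarrow>\<^sub>E carrier R) \<subseteq> carrier Q"
    using Y_closed by (auto simp: PiE_iff intro!: emb.S.finsum_closed)
  then show ?thesis
    using root_ext_powers_inj_on root_ext_powers_onto by (auto simp: bij_betw_def)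
qed

end

theorem proposition5p4:
  fixes R :: "('a, 'b) ring_scheme" and n m :: nat and iota :: "complex \<Rightarrow> 'a" and x :: 'a
  assumes "n \<ge> 1"
    and "cring R"
    and "mu_embedding R n iota"
    and "S_generator R n iota x"
    and "m \<ge> 1"
  shows "S_generator (root_ext R m x) n (root_ext_map R m x \<circ> iota) (root_ext_Y R m x)"
proof -
  interpret root_extension R "UP R" m x
    using assms
    by (intro root_extension.intro UP_cring.intro root_extension_axioms.intro)
      (auto simp: S_generator_def)
  interpret emb: ring_hom_cring R "root_ext R m x" "root_ext_map R m x" by (rule emb_hom)
  show ?thesis
    by (rule emb.S_generator_if_power_basis[OF m_pos R.mu_embedding_image_subset[OF assms(3)]
          assms(4) Y_closed Y_pow root_ext_power_basis])
qed

end
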